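(* For every integer $n\ge 0$, \[ \sum_{k=0}^{n}\Big(-\frac{1}{4}\Big)^k\binom{n}{k}\binom{2k}{k}H_{2k} =\frac{1}{2^{1+2n}}\binom{2n}{n}\{3H_n-4H_{2n}\}. \]
   Context: For an integer $m\ge 0$, $H_m$ denotes the $m$-th harmonic number: $H_0=0$ and $H_m=\sum_{j=1}^m \frac1j$ for $m\ge1$. $\binom{n}{k}$ is the usual binomial coefficient. *)

theory Defs
  imports "HOL-Analysis.Analysis"
begin

end

theory Submission
  imports Defs
begin

text \<open>
  Write p(k) = C(2k,k) / 4^k, so that the sum is the alternating binomial transform
  S(n) = sum_k (-1)^k C(n,k) p(k) H(2k). By creative telescoping, (2n+2) times the summand
  for n+1 minus (2n+1) times the summand for n is a difference in k. Summing by parts against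
  H(2k) leaves only the increments 1/(2k+1) + 1/(2k+2), which produce binomial transforms of p
  itself; since the transform of p is p, this gives (2n+2) S(n+1) = (2n+1) S(n) + p(n+1) - 2 p(n).
  The right-hand side of the theorem satisfies the same first-order recurrence and initial value.
\<close>

lemma binomial_Suc_weighted:
  "(2*n+2) * (Suc n choose k) = (2*n+2*k+2) * (n choose k) + 2*k*(n choose (k-1))"
proof (cases k)
  case (Suc j)
  have absorb: "(n - j) * (n choose j) = Suc j * (n choose Suc j)"
    by (simp only: binomial_absorption binomial_absorb_comp)
  show ?thesis
  proof (cases "j \<le> n")
    case True
    then obtain m where "n = j + m" using le_Suc_ex by blast
    with absorb have "(2*n+2) * (n choose j) = 2 * Suc j * (n choose Suc j) + 2 * Suc j * (n choose j)"
      by (simp add: algebra_simps)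
    then show ?thesis using Suc by (simp add: algebra_simps)
  qed (simp add: Suc binomial_eq_0)
qed simp

definition binomial_transform :: "(nat \<Rightarrow> 'a::comm_ring_1) \<Rightarrow> nat \<Rightarrow> 'a" where
  "binomial_transform u n = (\<Sum>k\<le>n. (-1)^k * of_nat (n choose k) * u k)"

lemma binomial_transform_Suc:
  "binomial_transform u (Suc n) = binomial_transform u n - binomial_transform (\<lambda>k. u (Suc k)) n"
proof -
  have shift: "(\<Sum>k\<le>n. (-1)^k * of_nat (n choose k) * u k)
      = u 0 - (\<Sum>k\<le>n. (-1)^k * of_nat (n choose Suc k) * u (Suc k))"
    using sum.atMost_Suc_shift[of "\<lambda>k. (-1)^k * of_nat (n choose k) * u k" n]
    by (simp add: sum_negf binomial_eq_0)
  have "binomial_transform u (Suc n)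
      = u 0 - (\<Sum>k\<le>n. (-1)^k * (of_nat (n choose k) + of_nat (n choose Suc k)) * u (Suc k))"
    unfolding binomial_transform_def by (subst sum.atMost_Suc_shift) (simp add: sum_negf)
  then show ?thesis
    unfolding binomial_transform_def shift by (simp add: sum.distrib algebra_simps)
qed

lemma first_order_recurrence_unique:
  fixes x y :: "nat \<Rightarrow> 'a::idom"
  assumes "\<And>n. c n \<noteq> 0"
    and "\<And>n. c n * x (Suc n) = d n * x n + e n"
    and "\<And>n. c n * y (Suc n) = d n * y n + e n"
    and "x 0 = y 0"
  shows "x n = y n"
proof (induction n)
  case (Suc n)
  then have "c n * x (Suc n) = c n * y (Suc n)" by (simp add: assms(2,3))
  with assms(1) show ?case by simp
qed (fact assms(4))

lemma harm_double_Suc: "harm (2 * Suc k) = harm (2*k) + 1 / (2*k+1) + (1 / (2*k+2) :: real)"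
  by (simp add: harm_Suc inverse_eq_divide add_ac)

definition central_prob :: "nat \<Rightarrow> real" where
  "central_prob k = real ((2*k) choose k) / 4^k"

lemma central_prob_Suc: "central_prob (Suc k) = (2*k+1) / (2*k+2) * central_prob k"
proof -
  have central: "real ((2*m) choose m) = fact (2*m) / (fact m)^2" for m
    using binomial_fact[of m "2*m", where 'a=real] by (simp add: power2_eq_square)
  have "fact (2 * Suc k) = (2*k+2) * (2*k+1) * (fact (2*k) :: real)"
    by (simp add: algebra_simps)
  then show ?thesis
    unfolding central_prob_def central
    by (simp add: divide_simps) (simp add: algebra_simps power2_eq_square)
qed

lemma central_prob_telescoping:
  "(2 * real n + 2) * binomial_transform (\<lambda>k. central_prob k * f k) (Suc n)
     - (2 * real n + 1) * binomial_transform (\<lambda>k. central_prob k * f k) n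
   = (\<Sum>k\<le>n. (-1)^k * (2*k+1) * real (n choose k) * central_prob k * (f k - f (Suc k)))"
proof -
  \<comment> \<open>The telescoping certificate; at \<open>k = 0\<close> the truncated \<open>k - 1\<close> is killed by the factor \<open>2k\<close>.\<close>
  define G where "G k = (-1)^Suc k * (2*k) * real (n choose (k-1)) * central_prob k" for k
  have G_Suc: "G (Suc k) = (-1)^k * (2*k+1) * real (n choose k) * central_prob k" for k
    by (simp add: G_def central_prob_Suc field_simps)
  have step: "(2 * real n + 2) * ((-1)^k * real (Suc n choose k) * central_prob k)
      - (2 * real n + 1) * ((-1)^k * real (n choose k) * central_prob k) = G (Suc k) - G k" for k
  proof -
    have "real ((2*n+2) * (Suc n choose k)) = real ((2*n+2*k+2) * (n choose k) + 2*k*(n choose (k-1)))"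
      by (simp only: binomial_Suc_weighted)
    then show ?thesis
      unfolding G_Suc by (simp add: G_def algebra_simps)
  qed
  have "(2 * real n + 2) * binomial_transform (\<lambda>k. central_prob k * f k) (Suc n)
     - (2 * real n + 1) * binomial_transform (\<lambda>k. central_prob k * f k) n
     = (\<Sum>k\<le>Suc n. (G (Suc k) - G k) * f k)"
    by (simp add: binomial_transform_def sum_distrib_left sum_subtractf step[symmetric]
        algebra_simps binomial_eq_0)
  also have "\<dots> = (\<Sum>k\<le>Suc n. G (Suc k) * f k) - (\<Sum>k\<le>Suc n. G k * f k)"
    by (simp add: left_diff_distrib sum_subtractf)
  also have "(\<Sum>k\<le>Suc n. G (Suc k) * f k) = (\<Sum>k\<le>n. G (Suc k) * f k)"
    by (simp add: G_def binomial_eq_0)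
  also have "(\<Sum>k\<le>Suc n. G k * f k) = (\<Sum>k\<le>n. G (Suc k) * f (Suc k))"
    by (subst sum.atMost_Suc_shift) (simp add: G_def)
  also have "(\<Sum>k\<le>n. G (Suc k) * f k) - (\<Sum>k\<le>n. G (Suc k) * f (Suc k))
      = (\<Sum>k\<le>n. G (Suc k) * (f k - f (Suc k)))"
    by (simp add: right_diff_distrib sum_subtractf)
  finally show ?thesis by (simp only: G_Suc)
qed

lemma binomial_transform_central_prob: "binomial_transform central_prob n = central_prob n"
proof (rule first_order_recurrence_unique[where c = "\<lambda>n. 2 * real n + 2"
      and d = "\<lambda>n. 2 * real n + 1" and e = "\<lambda>_. 0"])
  show "(2 * real n + 2) * binomial_transform central_prob (Suc n)
      = (2 * real n + 1) * binomial_transform central_prob n + 0" for n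
    using central_prob_telescoping[of n "\<lambda>_. 1"] by simp
  show "(2 * real n + 2) * central_prob (Suc n) = (2 * real n + 1) * central_prob n + 0" for n
    by (simp add: central_prob_Suc field_simps)
qed (simp_all add: binomial_transform_def central_prob_def add_nonneg_eq_0_iff)

lemma binomial_transform_central_prob_harm_Suc:
  "(2 * real n + 2) * binomial_transform (\<lambda>k. central_prob k * harm (2*k)) (Suc n)
   = (2 * real n + 1) * binomial_transform (\<lambda>k. central_prob k * harm (2*k)) n
     + central_prob (Suc n) - 2 * central_prob n"
proof -
  have summand: "(-1)^k * (2*real k+1) * real (n choose k) * central_prob k
        * (harm (2*k) - harm (2 * Suc k))
      = - ((-1)^k * real (n choose k) * central_prob k)
        - (-1)^k * real (n choose k) * central_prob (Suc k)" for k
  proof -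
    have diff: "harm (2*k) - harm (2 * Suc k) = - (1 / (2*real k+1) + 1 / (2*real k+2))"
      unfolding harm_double_Suc by simp
    have "2 * real k + 1 \<noteq> 0" "2 * real k + 2 \<noteq> 0" by linarith+
    then show ?thesis
      unfolding diff central_prob_Suc by (simp add: divide_simps) (simp add: algebra_simps)
  qed
  have "(2 * real n + 2) * binomial_transform (\<lambda>k. central_prob k * harm (2*k)) (Suc n)
      - (2 * real n + 1) * binomial_transform (\<lambda>k. central_prob k * harm (2*k)) n
      = - binomial_transform central_prob n - binomial_transform (\<lambda>k. central_prob (Suc k)) n"
    unfolding central_prob_telescoping summand
    by (simp only: sum_subtractf sum_negf binomial_transform_def)
  then show ?thesis
    using binomial_transform_Suc[of central_prob n] by (simp add: binomial_transform_central_prob)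
qed

lemma binomial_transform_central_prob_harm:
  "binomial_transform (\<lambda>k. central_prob k * harm (2*k)) n
   = central_prob n / 2 * (3 * harm n - 4 * harm (2*n))"
proof (rule first_order_recurrence_unique[where c = "\<lambda>n. 2 * real n + 2"
      and d = "\<lambda>n. 2 * real n + 1" and e = "\<lambda>n. central_prob (Suc n) - 2 * central_prob n"
      and x = "binomial_transform (\<lambda>k. central_prob k * harm (2*k))"
      and y = "\<lambda>n. central_prob n / 2 * (3 * harm n - 4 * harm (2*n))"])
  show "(2 * real n + 2) * binomial_transform (\<lambda>k. central_prob k * harm (2*k)) (Suc n)
      = (2 * real n + 1) * binomial_transform (\<lambda>k. central_prob k * harm (2*k)) n
        + (central_prob (Suc n) - 2 * central_prob n)" for n
    using binomial_transform_central_prob_harm_Suc[of n] by simp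
  show "(2 * real n + 2) * (central_prob (Suc n) / 2 * (3 * harm (Suc n) - 4 * harm (2 * Suc n)))
      = (2 * real n + 1) * (central_prob n / 2 * (3 * harm n - 4 * harm (2*n)))
        + (central_prob (Suc n) - 2 * central_prob n)" for n
  proof -
    have "2 * real n + 1 \<noteq> 0" "2 * real n + 2 \<noteq> 0" "real n + 1 \<noteq> 0" by linarith+
    then show ?thesis
      unfolding harm_double_Suc central_prob_Suc harm_Suc[of n]
      by (simp add: divide_simps) (simp add: algebra_simps)
  qed
qed (simp_all add: binomial_transform_def harm_expand(1) add_nonneg_eq_0_iff)

theorem theorem7:
  fixes n :: nat
  shows "(\<Sum>k=0..n. (-1/4::real)^k * real (n choose k) * real ((2*k) choose k) * harm (2*k))
         = 1 / 2^(1+2*n) * real ((2*n) choose n) * (3 * harm n - 4 * harm (2*n))"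
proof -
  have "(\<Sum>k=0..n. (-1/4::real)^k * real (n choose k) * real ((2*k) choose k) * harm (2*k))
      = binomial_transform (\<lambda>k. central_prob k * harm (2*k)) n"
    unfolding binomial_transform_def central_prob_def atLeast0AtMost
    by (simp add: power_divide power_minus' algebra_simps)
  also have "\<dots> = central_prob n / 2 * (3 * harm n - 4 * harm (2*n))"
    by (rule binomial_transform_central_prob_harm)
  also have "central_prob n / 2 = 1 / 2^(1+2*n) * real ((2*n) choose n)"
    by (simp add: central_prob_def power_add power_mult)
  finally show ?thesis .
qed

end
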